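(* Let $\mathscr T=(V,\mathcal E)$ be the directed Cartesian product of directed trees $\mathscr T_1,\dots,\mathscr T_d$. Then (i) $\mathscr T$ has no circuits; (ii) $\mathscr T$ is connected; (iii) $\mathscr T$ has at most one root; (iv) $\mathrm{card}(\mathsf{Chi}(u)\cap\mathsf{Chi}(v))\le1$ for all $u,v\in V$ with $u\ne v$.
   Context: A directed graph is a pair $(V,\mathcal E)$ with $\mathcal E\subseteq (V\times V)\setminus\{(v,v):v\in V\}$. A circuit is a finite sequence $v_1,\dots,v_n$ ($n\ge2$) of distinct vertices with $(v_i,v_{i+1})\in\mathcal E$ for $i<n$ and $(v_n,v_1)\in\mathcal E$. The graph is connected if any two distinct vertices $u,v$ are joined by a finite sequence of distinct vertices $u=v_1,\dots,v_n=v$ with $(v_i,v_{i+1})$ or $(v_{i+1},v_i)\in\mathcal E$ for each $i$. A root is a vertex $v$ with no $u$ such that $(u,v)\in\mathcal E$. A directed tree is a connected directed graph without circuits in which every non-root vertex has exactly one $u$ with $(u,v)\in\mathcal E$. All directed trees are assumed leafless (each vertex has at least one $w$ with $(v,w)\in\mathcal E$). $\mathsf{Chi}(u)=\{v:(u,v)\in\mathcal E\}$. The directed Cartesian product of directed trees $\mathscr T_j=(V_j,\mathcal E_j)$ is $V=V_1\times\dots\times V_d$ with $(v,w)\in\mathcal E$ iff there is $k$ with $(v_k,w_k)\in\mathcal E_k$ and $w_j=v_j$ for $j\ne k$. *)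

theory Defs
  imports Main "HOL-Library.FuncSet"
begin

definition digraph :: "'a set \<Rightarrow> ('a \<times> 'a) set \<Rightarrow> bool" where
  "digraph V E \<longleftrightarrow> E \<subseteq> (V \<times> V) - {(v, v) | v. v \<in> V}"

definition circuit :: "'a set \<Rightarrow> ('a \<times> 'a) set \<Rightarrow> 'a list \<Rightarrow> bool" where
  "circuit V E vs \<longleftrightarrow> length vs \<ge> 2 \<and> distinct vs \<and> set vs \<subseteq> V \<and>
     (\<forall>i. Suc i < length vs \<longrightarrow> (vs ! i, vs ! Suc i) \<in> E) \<and>
     (last vs, hd vs) \<in> E"

definition has_circuit :: "'a set \<Rightarrow> ('a \<times> 'a) set \<Rightarrow> bool" where
  "has_circuit V E \<longleftrightarrow> (\<exists>vs. circuit V E vs)"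

definition connected_digraph :: "'a set \<Rightarrow> ('a \<times> 'a) set \<Rightarrow> bool" where
  "connected_digraph V E \<longleftrightarrow>
     (\<forall>u\<in>V. \<forall>v\<in>V. u \<noteq> v \<longrightarrow>
        (\<exists>vs. vs \<noteq> [] \<and> hd vs = u \<and> last vs = v \<and> distinct vs \<and> set vs \<subseteq> V \<and>
              (\<forall>i. Suc i < length vs \<longrightarrow>
                 (vs ! i, vs ! Suc i) \<in> E \<or> (vs ! Suc i, vs ! i) \<in> E)))"

definition is_root :: "'a set \<Rightarrow> ('a \<times> 'a) set \<Rightarrow> 'a \<Rightarrow> bool" where
  "is_root V E v \<longleftrightarrow> v \<in> V \<and> \<not> (\<exists>u. (u, v) \<in> E)"

definition Chi :: "('a \<times> 'a) set \<Rightarrow> 'a \<Rightarrow> 'a set" where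
  "Chi E u = {v. (u, v) \<in> E}"

definition directed_tree :: "'a set \<Rightarrow> ('a \<times> 'a) set \<Rightarrow> bool" where
  "directed_tree V E \<longleftrightarrow> digraph V E \<and> connected_digraph V E \<and> \<not> has_circuit V E \<and>
     (\<forall>v\<in>V. \<not> is_root V E v \<longrightarrow> (\<exists>!u. (u, v) \<in> E)) \<and>
     (\<forall>v\<in>V. \<exists>w. (v, w) \<in> E)"

text \<open>Directed Cartesian product of trees indexed by j < d (paper's 1..d), vertices being
  extensional functions on {..<d}.\<close>
definition prod_V :: "nat \<Rightarrow> (nat \<Rightarrow> 'a set) \<Rightarrow> (nat \<Rightarrow> 'a) set" where
  "prod_V d Vs = PiE {..<d} Vs"

definition prod_E :: "nat \<Rightarrow> (nat \<Rightarrow> 'a set) \<Rightarrow> (nat \<Rightarrow> ('a \<times> 'a) set)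
                      \<Rightarrow> ((nat \<Rightarrow> 'a) \<times> (nat \<Rightarrow> 'a)) set" where
  "prod_E d Vs Es = {(v, w). v \<in> prod_V d Vs \<and> w \<in> prod_V d Vs \<and>
      (\<exists>k<d. (v k, w k) \<in> Es k \<and> (\<forall>j<d. j \<noteq> k \<longrightarrow> w j = v j))}"

end

theory Submission
  imports Defs
begin

text \<open>An edge of the product moves exactly one coordinate along an edge of that factor, so walks
  in the product project to walks in every factor. A circuit would therefore project to a cycle in
  some tree. Connectedness follows by moving the coordinates one at a time. The coordinates of a
  root are roots of the factors, hence unique. Finally, two distinct vertices with a common child
  differ in exactly two coordinates, in each of which one is the parent of the other; since trees
  have no 2-cycles, this determines the child.\<close>

section \<open>Walks, circuits and connectedness\<close>

lemma successively_rtrancl: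
  "successively (\<lambda>a b. (a, b) \<in> S) vs \<Longrightarrow> vs \<noteq> [] \<Longrightarrow> (hd vs, last vs) \<in> S\<^sup>*"
  by (induction vs) (auto simp: successively_Cons intro: converse_rtrancl_into_rtrancl)

lemma rtrancl_distinct_walk:
  assumes "(x, y) \<in> S\<^sup>*" "S \<subseteq> V \<times> V" "x \<in> V"
  shows "\<exists>vs. vs \<noteq> [] \<and> hd vs = x \<and> last vs = y \<and> distinct vs \<and> set vs \<subseteq> V \<and>
           successively (\<lambda>a b. (a, b) \<in> S) vs"
  using assms(1,3)
proof (induction rule: converse_rtrancl_induct)
  case base
  then show ?case by (intro exI[of _ "[y]"]) auto
next
  case (step x x')
  then have "x' \<in> V" using assms(2) by blast
  then obtain vs where vs: "vs \<noteq> []" "hd vs = x'" "last vs = y" "distinct vs" "set vs \<subseteq> V"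
    "successively (\<lambda>a b. (a, b) \<in> S) vs" using step.IH by blast
  show ?case
  proof (cases "x \<in> set vs")
    case True
    then obtain as bs where "vs = as @ x # bs" by (meson split_list)
    then show ?thesis using vs
      by (intro exI[of _ "x # bs"]) (auto simp: successively_append_iff)
  next
    case False
    then show ?thesis using vs step.prems step.hyps(1)
      by (intro exI[of _ "x # vs"]) (auto simp: successively_Cons)
  qed
qed

lemma circuit_iff_successively:
  "circuit V E vs \<longleftrightarrow> length vs \<ge> 2 \<and> distinct vs \<and> set vs \<subseteq> V \<and>
     successively (\<lambda>a b. (a, b) \<in> E) vs \<and> (last vs, hd vs) \<in> E"
  by (simp add: circuit_def successively_conv_nth)

lemma circuit_trancl_cycle:
  assumes "circuit V E vs"
  shows "(hd vs, hd vs) \<in> E\<^sup>+"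
proof -
  have "vs \<noteq> []" using assms by (auto simp: circuit_iff_successively)
  then have "(hd vs, last vs) \<in> E\<^sup>*"
    using assms successively_rtrancl by (auto simp: circuit_iff_successively)
  then show ?thesis
    using assms by (auto simp: circuit_iff_successively intro: rtrancl_into_trancl1)
qed

lemma trancl_cycle_has_circuit:
  assumes dg: "digraph V E" and cycle: "(x, x) \<in> E\<^sup>+"
  shows "has_circuit V E"
proof -
  have EV: "E \<subseteq> V \<times> V" and loop_free: "\<And>v. (v, v) \<notin> E"
    using dg unfolding digraph_def by auto
  obtain y where xy: "(x, y) \<in> E" and yx: "(y, x) \<in> E\<^sup>*"
    using cycle by (meson tranclD)
  then have "y \<noteq> x" "y \<in> V" using loop_free EV by auto
  then obtain vs where vs: "vs \<noteq> []" "hd vs = y" "last vs = x" "distinct vs" "set vs \<subseteq> V"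
    "successively (\<lambda>a b. (a, b) \<in> E) vs"
    using rtrancl_distinct_walk[OF yx EV] by blast
  have "length vs \<ge> 2"
  proof (rule ccontr)
    assume "\<not> length vs \<ge> 2"
    then obtain a where "vs = [a]" using vs(1) by (cases vs) (auto simp: Suc_le_eq)
    then show False using vs \<open>y \<noteq> x\<close> by simp
  qed
  then have "circuit V E vs" using vs xy by (simp add: circuit_iff_successively)
  then show ?thesis unfolding has_circuit_def by blast
qed

lemma connected_digraph_iff_rtrancl:
  assumes "E \<subseteq> V \<times> V"
  shows "connected_digraph V E \<longleftrightarrow> (\<forall>u\<in>V. \<forall>v\<in>V. (u, v) \<in> (E \<union> E\<inverse>)\<^sup>*)"
proof -
  have walk: "(\<forall>i. Suc i < length vs \<longrightarrow> (vs ! i, vs ! Suc i) \<in> E \<or> (vs ! Suc i, vs ! i) \<in> E)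
      \<longleftrightarrow> successively (\<lambda>a b. (a, b) \<in> E \<union> E\<inverse>) vs" for vs
    by (auto simp: successively_conv_nth)
  have sym_closure_V: "E \<union> E\<inverse> \<subseteq> V \<times> V" using assms by auto
  show ?thesis
    unfolding connected_digraph_def walk
  proof (intro iffI ballI impI)
    fix u v
    assume conn: "\<forall>u\<in>V. \<forall>v\<in>V. u \<noteq> v \<longrightarrow> (\<exists>vs. vs \<noteq> [] \<and> hd vs = u \<and> last vs = v \<and>
      distinct vs \<and> set vs \<subseteq> V \<and> successively (\<lambda>a b. (a, b) \<in> E \<union> E\<inverse>) vs)"
      and "u \<in> V" "v \<in> V"
    show "(u, v) \<in> (E \<union> E\<inverse>)\<^sup>*"
    proof (cases "u = v")
      case False
      then obtain vs where "vs \<noteq> []" "hd vs = u" "last vs = v"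
        "successively (\<lambda>a b. (a, b) \<in> E \<union> E\<inverse>) vs"
        using conn \<open>u \<in> V\<close> \<open>v \<in> V\<close> by blast
      then show ?thesis using successively_rtrancl by fastforce
    qed simp
  next
    fix u v assume "\<forall>u\<in>V. \<forall>v\<in>V. (u, v) \<in> (E \<union> E\<inverse>)\<^sup>*" "u \<in> V" "v \<in> V"
    then show "\<exists>vs. vs \<noteq> [] \<and> hd vs = u \<and> last vs = v \<and> distinct vs \<and> set vs \<subseteq> V \<and>
        successively (\<lambda>a b. (a, b) \<in> E \<union> E\<inverse>) vs"
      using rtrancl_distinct_walk[OF _ sym_closure_V] by blast
  qed
qed

text \<open>At the first backward edge of such a walk the vertex reached would have two distinct
  parents.\<close>

lemma undirected_walk_is_directed:
  assumes parent_unique: "\<And>a b c. (a, c) \<in> E \<Longrightarrow> (b, c) \<in> E \<Longrightarrow> a = b"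
    and "distinct (x # vs)" "successively (\<lambda>a b. (a, b) \<in> E \<union> E\<inverse>) (x # vs)"
    and "\<forall>p. (p, x) \<in> E \<longrightarrow> p \<notin> set vs"
  shows "successively (\<lambda>a b. (a, b) \<in> E) (x # vs)"
  using assms(2-)
proof (induction vs arbitrary: x)
  case Nil
  then show ?case by simp
next
  case (Cons y ws)
  have xy: "(x, y) \<in> E" using Cons.prems(2,3) by auto
  have "\<forall>p. (p, y) \<in> E \<longrightarrow> p \<notin> set ws"
    using Cons.prems(1) parent_unique[OF xy] by auto
  then have "successively (\<lambda>a b. (a, b) \<in> E) (y # ws)"
    using Cons.prems(1,2) by (intro Cons.IH) auto
  then show ?case using xy by simp
qed

lemma root_unique_if_parent_unique:
  assumes conn: "connected_digraph V E"
    and parent_unique: "\<And>a b c. (a, c) \<in> E \<Longrightarrow> (b, c) \<in> E \<Longrightarrow> a = b"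
    and r1: "is_root V E r1" and r2: "is_root V E r2"
  shows "r1 = r2"
proof (rule ccontr)
  assume ne: "r1 \<noteq> r2"
  have "r1 \<in> V" "r2 \<in> V" using r1 r2 by (auto simp: is_root_def)
  then obtain vs where vs: "vs \<noteq> []" "hd vs = r1" "last vs = r2" "distinct vs"
    and walk: "\<forall>i. Suc i < length vs \<longrightarrow> (vs ! i, vs ! Suc i) \<in> E \<or> (vs ! Suc i, vs ! i) \<in> E"
    using conn[unfolded connected_digraph_def, rule_format, OF _ _ ne] by blast
  obtain ws where vs_eq: "vs = r1 # ws" using vs(1,2) by (cases vs) auto
  have undirected: "successively (\<lambda>a b. (a, b) \<in> E \<union> E\<inverse>) (r1 # ws)"
    using walk unfolding vs_eq by (simp only: successively_conv_nth Un_iff converse_iff)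
  have no_parent: "\<forall>p. (p, r1) \<in> E \<longrightarrow> p \<notin> set ws" using r1 by (simp add: is_root_def)
  have "successively (\<lambda>a b. (a, b) \<in> E) vs"
    using undirected_walk_is_directed[OF parent_unique _ undirected no_parent] vs(4) vs_eq by simp
  then have "(r1, r2) \<in> E\<^sup>*" using successively_rtrancl[of E vs] vs(1-3) by simp
  then have "(r1, r2) \<in> E\<^sup>+" using ne by (simp add: rtrancl_eq_or_trancl)
  then obtain p where "(p, r2) \<in> E" by (meson tranclD2)
  then show False using r2 by (auto simp: is_root_def)
qed

section \<open>Directed trees\<close>

lemma directed_tree_edges_subset: "directed_tree V E \<Longrightarrow> E \<subseteq> V \<times> V"
  unfolding directed_tree_def digraph_def by blast

lemma directed_tree_parent_unique:
  assumes tree: "directed_tree V E" and ac: "(a, c) \<in> E" and bc: "(b, c) \<in> E"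
  shows "a = b"
proof -
  have "c \<in> V" "\<not> is_root V E c"
    using ac directed_tree_edges_subset[OF tree] by (auto simp: is_root_def)
  then have "\<exists>!u. (u, c) \<in> E" using tree unfolding directed_tree_def by simp
  then show ?thesis using ac bc by blast
qed

lemma directed_tree_acyclic:
  assumes "directed_tree V E" shows "(x, x) \<notin> E\<^sup>+"
proof
  assume "(x, x) \<in> E\<^sup>+"
  moreover have "digraph V E" "\<not> has_circuit V E" using assms by (simp_all add: directed_tree_def)
  ultimately show False using trancl_cycle_has_circuit[of V E x] by simp
qed

lemma directed_tree_root_unique:
  assumes tree: "directed_tree V E" and "is_root V E r1" "is_root V E r2"
  shows "r1 = r2"
proof (rule root_unique_if_parent_unique[OF _ _ assms(2,3)])
  show "connected_digraph V E" using tree by (simp add: directed_tree_def)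
  show "\<And>a b c. (a, c) \<in> E \<Longrightarrow> (b, c) \<in> E \<Longrightarrow> a = b"
    using directed_tree_parent_unique[OF tree] .
qed

section \<open>The directed Cartesian product\<close>

lemma prod_E_subset: "prod_E d Vs Es \<subseteq> prod_V d Vs \<times> prod_V d Vs"
  unfolding prod_E_def by blast

lemma prod_E_imp_fun_upd:
  assumes "(v, w) \<in> prod_E d Vs Es"
  shows "\<exists>k<d. (v k, w k) \<in> Es k \<and> w = v(k := w k)"
proof -
  obtain k where k: "k < d" "(v k, w k) \<in> Es k" "\<forall>j<d. j \<noteq> k \<longrightarrow> w j = v j"
    and v: "v \<in> prod_V d Vs" and w: "w \<in> prod_V d Vs" using assms by (auto simp: prod_E_def)
  have outside_k: "w j = v j" if "j \<noteq> k" for j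
  proof (cases "j < d")
    case True
    then show ?thesis using k(3) that by blast
  next
    case False
    \<comment> \<open>outside \<open>{..<d}\<close> both are \<open>undefined\<close>, by extensionality\<close>
    then have "j \<notin> {..<d}" by simp
    then show ?thesis using v w unfolding prod_V_def by (metis PiE_arb)
  qed
  have "w = v(k := w k)"
  proof
    fix j show "w j = (v(k := w k)) j" using outside_k by (cases "j = k") simp_all
  qed
  then show ?thesis using k(1,2) by blast
qed

lemma fun_upd_in_prod_E:
  assumes x: "x \<in> prod_V d Vs" and j: "j < d" and "(p, q) \<in> Es j" "p \<in> Vs j" "q \<in> Vs j"
  shows "(x(j := p), x(j := q)) \<in> prod_E d Vs Es"
proof -
  have "x(j := p) \<in> prod_V d Vs" "x(j := q) \<in> prod_V d Vs"
    using PiE_fun_upd[of _ Vs j x "{..<d}"] assms by (simp_all add: prod_V_def insert_absorb)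
  then show ?thesis using assms by (auto simp: prod_E_def)
qed

lemma prod_E_rtrancl_coord:
  "(v, w) \<in> (prod_E d Vs Es)\<^sup>* \<Longrightarrow> (v j, w j) \<in> (Es j)\<^sup>*"
proof (induction rule: rtrancl_induct)
  case base
  then show ?case by simp
next
  case (step y z)
  obtain k where k: "(y k, z k) \<in> Es k" "z = y(k := z k)"
    using prod_E_imp_fun_upd[OF step(2)] by blast
  have "(y j, z j) \<in> (Es j)\<^sup>*"
  proof (cases "j = k")
    case False
    then have "z j = y j" using k(2) by (metis fun_upd_other)
    then show ?thesis by simp
  qed (use k(1) in simp)
  then show ?case using step(3) by (meson rtrancl_trans)
qed

lemma prod_E_trancl_cycle_coord:
  assumes "(x, x) \<in> (prod_E d Vs Es)\<^sup>+"
  shows "\<exists>k<d. (x k, x k) \<in> (Es k)\<^sup>+"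
proof -
  obtain y where xy: "(x, y) \<in> prod_E d Vs Es" and yx: "(y, x) \<in> (prod_E d Vs Es)\<^sup>*"
    using assms by (meson tranclD)
  obtain k where "k < d" "(x k, y k) \<in> Es k" using prod_E_imp_fun_upd[OF xy] by blast
  moreover have "(y k, x k) \<in> (Es k)\<^sup>*" using prod_E_rtrancl_coord[OF yx] .
  ultimately show ?thesis by (meson rtrancl_into_trancl2)
qed

lemma prod_E_sym_rtrancl_fun_upd:
  assumes EV: "Es j \<subseteq> Vs j \<times> Vs j" and j: "j < d" and x: "x \<in> prod_V d Vs"
    and "(a, b) \<in> (Es j \<union> (Es j)\<inverse>)\<^sup>*"
  shows "(x(j := a), x(j := b)) \<in> (prod_E d Vs Es \<union> (prod_E d Vs Es)\<inverse>)\<^sup>*"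
  using assms(4)
proof (induction rule: rtrancl_induct)
  case base
  then show ?case by simp
next
  case (step y z)
  have forward: "(x(j := p), x(j := q)) \<in> prod_E d Vs Es" if "(p, q) \<in> Es j" for p q
    using fun_upd_in_prod_E[of x d Vs j p q Es] x j that EV by blast
  have "(x(j := y), x(j := z)) \<in> prod_E d Vs Es \<union> (prod_E d Vs Es)\<inverse>"
    using step(2) forward by blast
  then show ?case using step(3) by (meson rtrancl.rtrancl_into_rtrancl)
qed

lemma prod_no_circuit:
  assumes trees: "\<And>j. j < d \<Longrightarrow> directed_tree (Vs j) (Es j)"
  shows "\<not> has_circuit (prod_V d Vs) (prod_E d Vs Es)"
proof
  assume "has_circuit (prod_V d Vs) (prod_E d Vs Es)"
  then obtain vs where "circuit (prod_V d Vs) (prod_E d Vs Es) vs" by (auto simp: has_circuit_def)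
  then have "(hd vs, hd vs) \<in> (prod_E d Vs Es)\<^sup>+" by (rule circuit_trancl_cycle)
  then obtain k where "k < d" "(hd vs k, hd vs k) \<in> (Es k)\<^sup>+"
    using prod_E_trancl_cycle_coord by blast
  then show False using directed_tree_acyclic[OF trees] by blast
qed

lemma prod_connected:
  assumes EV: "\<And>j. j < d \<Longrightarrow> Es j \<subseteq> Vs j \<times> Vs j"
    and conn: "\<And>j. j < d \<Longrightarrow> connected_digraph (Vs j) (Es j)"
  shows "connected_digraph (prod_V d Vs) (prod_E d Vs Es)"
  unfolding connected_digraph_iff_rtrancl[OF prod_E_subset]
proof (intro ballI)
  fix u v assume u: "u \<in> prod_V d Vs" and v: "v \<in> prod_V d Vs"
  let ?S = "prod_E d Vs Es \<union> (prod_E d Vs Es)\<inverse>"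
  define w where "w m = (\<lambda>i. if i < m then v i else u i)" for m
  have w_in: "w m \<in> prod_V d Vs" for m
    using u v unfolding w_def prod_V_def PiE_iff extensional_def by auto
  have "(u, w m) \<in> ?S\<^sup>*" if "m \<le> d" for m
    using that
  proof (induction m)
    case 0
    then show ?case by (simp add: w_def)
  next
    case (Suc m)
    then have m: "m < d" by simp
    have "u m \<in> Vs m" "v m \<in> Vs m"
      using PiE_mem u v m unfolding prod_V_def by fastforce+
    then have "(u m, v m) \<in> (Es m \<union> (Es m)\<inverse>)\<^sup>*"
      using conn[OF m] connected_digraph_iff_rtrancl[OF EV[OF m]] by blast
    then have "((w m)(m := u m), (w m)(m := v m)) \<in> ?S\<^sup>*"
      using prod_E_sym_rtrancl_fun_upd[of Es m Vs d "w m"] EV[OF m] m w_in by blast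
    moreover have "(w m)(m := u m) = w m" "(w m)(m := v m) = w (Suc m)"
      by (auto simp: w_def)
    ultimately have "(w m, w (Suc m)) \<in> ?S\<^sup>*" by simp
    then show ?case using Suc by (meson Suc_leD rtrancl_trans)
  qed
  moreover have "w d = v"
  proof
    fix i
    show "w d i = v i"
    proof (cases "i < d")
      case False
      \<comment> \<open>both sides are \<open>undefined\<close> there\<close>
      then have "i \<notin> {..<d}" by simp
      then show ?thesis using u v unfolding w_def prod_V_def by (metis PiE_arb)
    qed (simp add: w_def)
  qed
  ultimately show "(u, v) \<in> ?S\<^sup>*" by (metis order_refl)
qed

lemma prod_root_coord:
  assumes EV: "Es j \<subseteq> Vs j \<times> Vs j" and j: "j < d"
    and root: "is_root (prod_V d Vs) (prod_E d Vs Es) u"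
  shows "is_root (Vs j) (Es j) (u j)"
proof -
  have u: "u \<in> prod_V d Vs" using root by (simp add: is_root_def)
  have "(u(j := p), u) \<in> prod_E d Vs Es" if p: "(p, u j) \<in> Es j" for p
    using fun_upd_in_prod_E[of u d Vs j p "u j" Es] u j p EV by auto
  then show ?thesis using root u j by (auto simp: is_root_def prod_V_def)
qed

lemma prod_root_unique:
  assumes trees: "\<And>j. j < d \<Longrightarrow> directed_tree (Vs j) (Es j)"
    and "is_root (prod_V d Vs) (prod_E d Vs Es) u" "is_root (prod_V d Vs) (prod_E d Vs Es) v"
  shows "u = v"
proof (rule PiE_ext)
  show "u \<in> PiE {..<d} Vs" "v \<in> PiE {..<d} Vs" using assms by (auto simp: is_root_def prod_V_def)
next
  fix j assume "j \<in> {..<d}"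
  then have j: "j < d" by simp
  note EV = directed_tree_edges_subset[OF trees[OF j]]
  show "u j = v j"
    using directed_tree_root_unique[OF trees[OF j] prod_root_coord[OF EV j assms(2)]
        prod_root_coord[OF EV j assms(3)]] .
qed

lemma prod_common_child:
  assumes trees: "\<And>j. j < d \<Longrightarrow> directed_tree (Vs j) (Es j)"
    and ne: "u \<noteq> v" and uw: "(u, w) \<in> prod_E d Vs Es" and vw: "(v, w) \<in> prod_E d Vs Es"
  shows "\<exists>k l. k < d \<and> l < d \<and> k \<noteq> l \<and> w = u(k := v k) \<and> (u k, v k) \<in> Es k \<and>
           (v l, u l) \<in> Es l \<and> (\<forall>j. j \<noteq> k \<and> j \<noteq> l \<longrightarrow> u j = v j)"
proof -
  obtain k where k: "k < d" "(u k, w k) \<in> Es k" "w = u(k := w k)"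
    using prod_E_imp_fun_upd[OF uw] by blast
  obtain l where l: "l < d" "(v l, w l) \<in> Es l" "w = v(l := w l)"
    using prod_E_imp_fun_upd[OF vw] by blast
  have "k \<noteq> l"
  proof
    assume "k = l"
    then have "u k = v k" using directed_tree_parent_unique[OF trees[OF k(1)] k(2)] l(2) by simp
    then show False using ne k(3) l(3) \<open>k = l\<close> by (metis fun_upd_triv fun_upd_upd)
  qed
  then have "w k = v k" "w l = u l" "\<forall>j. j \<noteq> k \<and> j \<noteq> l \<longrightarrow> u j = v j"
    using k(3) l(3) by (metis fun_upd_other)+
  then show ?thesis using k l \<open>k \<noteq> l\<close> by metis
qed

lemma prod_common_child_unique:
  assumes trees: "\<And>j. j < d \<Longrightarrow> directed_tree (Vs j) (Es j)"
    and ne: "u \<noteq> v"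
    and w: "w \<in> Chi (prod_E d Vs Es) u \<inter> Chi (prod_E d Vs Es) v"
    and w': "w' \<in> Chi (prod_E d Vs Es) u \<inter> Chi (prod_E d Vs Es) v"
  shows "w = w'"
proof -
  have "(u, w) \<in> prod_E d Vs Es" "(v, w) \<in> prod_E d Vs Es"
    and "(u, w') \<in> prod_E d Vs Es" "(v, w') \<in> prod_E d Vs Es"
    using w w' by (simp_all add: Chi_def)
  obtain k l where kl: "l < d" "w = u(k := v k)" "(v l, u l) \<in> Es l"
    "\<forall>j. j \<noteq> k \<and> j \<noteq> l \<longrightarrow> u j = v j"
    using prod_common_child[of d Vs Es u v w] trees ne \<open>(u, w) \<in> _\<close> \<open>(v, w) \<in> _\<close> by blast
  obtain k' where k': "k' < d" "w' = u(k' := v k')" "(u k', v k') \<in> Es k'"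
    using prod_common_child[of d Vs Es u v w'] trees ne \<open>(u, w') \<in> _\<close> \<open>(v, w') \<in> _\<close> by blast
  show ?thesis
  proof (cases "k' = k")
    case True
    then show ?thesis using kl k' by simp
  next
    case False
    have "u k' \<noteq> v k'" using k' directed_tree_acyclic[OF trees[OF k'(1)]] by fastforce
    then have "k' = l" using kl(4) False by blast
    \<comment> \<open>then \<open>u l\<close> and \<open>v l\<close> would form a 2-cycle in the \<open>l\<close>-th tree\<close>
    then have "(u l, u l) \<in> (Es l)\<^sup>+" using k'(3) kl(3) by (meson trancl.intros)
    then show ?thesis using directed_tree_acyclic[OF trees[OF kl(1)]] by blast
  qed
qed

theorem mainTheorem9:
  fixes d :: nat and Vs :: "nat \<Rightarrow> 'a set" and Es :: "nat \<Rightarrow> ('a \<times> 'a) set"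
  assumes trees: "\<And>j. j < d \<Longrightarrow> directed_tree (Vs j) (Es j)"
  shows "\<not> has_circuit (prod_V d Vs) (prod_E d Vs Es) \<and>
         connected_digraph (prod_V d Vs) (prod_E d Vs Es) \<and>
         (\<forall>u v. is_root (prod_V d Vs) (prod_E d Vs Es) u \<and>
                is_root (prod_V d Vs) (prod_E d Vs Es) v \<longrightarrow> u = v) \<and>
         (\<forall>u\<in>prod_V d Vs. \<forall>v\<in>prod_V d Vs. u \<noteq> v \<longrightarrow>
            finite (Chi (prod_E d Vs Es) u \<inter> Chi (prod_E d Vs Es) v) \<and>
            card (Chi (prod_E d Vs Es) u \<inter> Chi (prod_E d Vs Es) v) \<le> 1)"
proof (intro conjI allI impI ballI)
  show "\<not> has_circuit (prod_V d Vs) (prod_E d Vs Es)" by (rule prod_no_circuit) (rule trees)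
  have "\<And>j. j < d \<Longrightarrow> connected_digraph (Vs j) (Es j)"
    using trees unfolding directed_tree_def by blast
  then show "connected_digraph (prod_V d Vs) (prod_E d Vs Es)"
    using prod_connected directed_tree_edges_subset[OF trees] by blast
next
  fix u v
  assume "is_root (prod_V d Vs) (prod_E d Vs Es) u \<and> is_root (prod_V d Vs) (prod_E d Vs Es) v"
  then show "u = v" using prod_root_unique[of d Vs Es u v] trees by blast
next
  fix u v assume "u \<in> prod_V d Vs" "v \<in> prod_V d Vs" "u \<noteq> v"
  let ?C = "Chi (prod_E d Vs Es) u \<inter> Chi (prod_E d Vs Es) v"
  have "w = w'" if "w \<in> ?C" "w' \<in> ?C" for w w'
    using prod_common_child_unique[of d Vs Es u v w w'] trees \<open>u \<noteq> v\<close> that by blast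
  then have "?C = {} \<or> (\<exists>w. ?C = {w})" by blast
  then show "finite ?C" "card ?C \<le> 1" by auto
qed

end
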